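(* Let $t_0\in\mathbb{R}$, let $A,\Delta,K:[t_0,\infty)\to\mathbb{R}^{n\times n}$ be piecewise continuous, $B\in\mathbb{R}^{n\times n}$ constant, and $\omega:\mathbb{R}^n\times[t_0,\infty)\to\mathbb{R}^n$ piecewise continuous (no assumption $\omega(0,t)=0$ is made). Consider \[ \dot x=\big[A(t)+\Delta(t)\big]x+BK(t)x+\omega(x,t),\qquad t\ge t_0 . \] Suppose that for some vector norm $\|\cdot\|$ on $\mathbb{R}^n$ with associated logarithmic norm $\mu$: (A1) $\int_{t_0}^\infty|\mu[\Delta(s)]|\,ds<\infty$; (A2) there is $T\ge t_0$ such that $\mu[A(t)+BK(t)]<0$ for all $t\ge T$; (A3) there is a piecewise continuous function $\tilde\omega:[t_0,\infty)\to\mathbb{R}^n$ with $\|\omega(x,t)\|\le\|\tilde\omega(t)\|$ for all $x\in\mathbb{R}^n$, $t\ge t_0$, and \[ \lim_{t\to\infty}\frac{\|\tilde\omega(t)\|}{\mu[A(t)+BK(t)]}=0; \] (A4) $\int_{t_0}^t\mu[A(s)+BK(s)]\,ds\to-\infty$ as $t\to\infty$. Then every solution $x:[t_0,\infty)\to\mathbb{R}^n$ of this system satisfies $x(t)\to0$ as $t\to\infty$.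
   Context: For a vector norm $\|\cdot\|$ on $\mathbb{R}^n$, matrices are normed by the induced operator norm $\|\mathcal{A}\|=\max_{\|x\|=1}\|\mathcal{A}x\|$. The logarithmic norm of $\mathcal{A}\in\mathbb{R}^{n\times n}$ is $\mu[\mathcal{A}]=\lim_{h\to0^+}\frac{\|I_n+h\mathcal{A}\|-1}{h}$, where $I_n$ is the identity matrix; it can be negative. *)

theory Defs
  imports "HOL-Analysis.Analysis"
begin

definition is_vector_norm :: "(real^'n \<Rightarrow> real) \<Rightarrow> bool" where
  "is_vector_norm N \<longleftrightarrow>
     (\<forall>x. 0 \<le> N x) \<and> (\<forall>x. N x = 0 \<longleftrightarrow> x = 0) \<and>
     (\<forall>c x. N (c *\<^sub>R x) = \<bar>c\<bar> * N x) \<and> (\<forall>x y. N (x + y) \<le> N x + N y)"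

definition induced_norm :: "(real^'n \<Rightarrow> real) \<Rightarrow> real^'n^'n \<Rightarrow> real" where
  "induced_norm N M = Sup {N (M *v x) | x. N x = 1}"

definition log_norm :: "(real^'n \<Rightarrow> real) \<Rightarrow> real^'n^'n \<Rightarrow> real" where
  "log_norm N M = Lim (at_right 0) (\<lambda>h. (induced_norm N (mat 1 + h *\<^sub>R M) - 1) / h)"

definition piecewise_continuous_from :: "real \<Rightarrow> (real \<Rightarrow> 'a::topological_space) \<Rightarrow> bool" where
  "piecewise_continuous_from t0 f \<longleftrightarrow>
     (\<forall>b\<ge>t0. \<exists>S. finite S \<and> continuous_on ({t0..b} - S) f \<and>
        (\<forall>s\<in>S. (\<exists>l. (f \<longlongrightarrow> l) (at_right s)) \<and> (t0 < s \<longrightarrow> (\<exists>l. (f \<longlongrightarrow> l) (at_left s)))))"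

definition piecewise_continuous_state_time ::
    "real \<Rightarrow> ('b::topological_space \<Rightarrow> real \<Rightarrow> 'a::topological_space) \<Rightarrow> bool" where
  "piecewise_continuous_state_time t0 w \<longleftrightarrow>
     (\<forall>b\<ge>t0. \<exists>S. finite S \<and> continuous_on (UNIV \<times> ({t0..b} - S)) (\<lambda>(x, t). w x t)) \<and>
     (\<forall>x. piecewise_continuous_from t0 (\<lambda>t. w x t))"

text \<open>Solution on [t0, infinity) of x' = F (x, t), in the (Caratheodory) integral sense:
  x continuous and x t = x t0 + integral of F (x s, s) over [t0,t].\<close>
definition is_solution_from ::
    "real \<Rightarrow> (real^'n \<Rightarrow> real \<Rightarrow> real^'n) \<Rightarrow> (real \<Rightarrow> real^'n) \<Rightarrow> bool" where
  "is_solution_from t0 F x \<longleftrightarrow>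
     continuous_on {t0..} x \<and>
     (\<forall>t\<ge>t0. ((\<lambda>s. F (x s) s) has_integral (x t - x t0)) {t0..t})"

end

theory Submission
  imports Defs
begin

text \<open>Let \<open>u = N \<circ> x\<close>, \<open>a = \<mu>[A + BK]\<close> and \<open>d = |\<mu>[\<Delta>]|\<close>. Since
  \<open>\<parallel>I + h M\<parallel> \<le> 1 + h (\<mu>[M] + o(1))\<close> and \<open>\<mu>\<close> is subadditive, at every time where the data are
  continuous the upper right Dini derivative satisfies \<open>D\<^sup>+u \<le> (a + d) u + \<parallel>\<omega>\<^sub>t\<parallel>\<close>.
  Once \<open>a < 0\<close> and \<open>\<parallel>\<omega>\<^sub>t\<parallel> \<le> -\<epsilon> a\<close>, a comparison argument (valid with finitely many
  exceptional times, by continuity) gives \<open>u t \<le> e\<^bsup>\<integral>d\<^esup> (u T e\<^bsup>\<integral>\<^sub>T\<^sup>t a\<^esup> + \<epsilon>)\<close>;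
  as \<open>\<integral>d < \<infinity>\<close> and \<open>\<integral>a \<rightarrow> -\<infinity>\<close>, \<open>u\<close> tends to \<open>0\<close>, and so does \<open>x\<close> because \<open>N\<close> is
  equivalent to the Euclidean norm.\<close>

lemma is_vector_normD:
  assumes "is_vector_norm N"
  shows "0 \<le> N x" "N x = 0 \<longleftrightarrow> x = 0" "N (c *\<^sub>R x) = \<bar>c\<bar> * N x" "N (x + y) \<le> N x + N y"
  using assms unfolding is_vector_norm_def by auto

lemma vector_norm_pos:
  assumes "is_vector_norm N" "x \<noteq> 0"
  shows "0 < N x"
  using is_vector_normD(1,2)[OF assms(1), of x] assms(2) by linarith

lemma vector_norm_minus_commute:
  assumes "is_vector_norm N"
  shows "N (x - y) = N (y - x)"
  using is_vector_normD(3)[OF assms, of "-1" "x - y"] by simp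

lemma vector_norm_sum:
  assumes "is_vector_norm N"
  shows "N (sum f S) \<le> (\<Sum>i\<in>S. N (f i))"
proof (induction S rule: infinite_finite_induct)
  case (insert i F)
  then show ?case using is_vector_normD(4)[OF assms, of "f i" "sum f F"] by simp
qed (use is_vector_normD(2)[OF assms, of 0] in simp_all)

lemma vector_norm_le_norm:
  fixes N :: "real^'n \<Rightarrow> real"
  assumes "is_vector_norm N"
  obtains C where "C > 0" "\<And>x. N x \<le> C * norm x"
proof
  define C where "C = 1 + (\<Sum>i\<in>UNIV. N (axis i (1::real) :: real^'n))"
  show "C > 0"
    unfolding C_def using is_vector_normD(1)[OF assms] by (simp add: add_pos_nonneg sum_nonneg)
  fix x :: "real^'n"
  have "N x = N (\<Sum>i\<in>UNIV. (x$i) *\<^sub>R axis i 1)"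
    using basis_expansion[of x] by (simp add: scalar_mult_eq_scaleR)
  also have "\<dots> \<le> (\<Sum>i\<in>UNIV. N ((x$i) *\<^sub>R axis i 1))"
    by (rule vector_norm_sum[OF assms])
  also have "\<dots> = (\<Sum>i\<in>UNIV. \<bar>x$i\<bar> * N (axis i 1))"
    using is_vector_normD(3)[OF assms] by simp
  also have "\<dots> \<le> (\<Sum>i\<in>UNIV. norm x * N (axis i 1))"
    by (intro sum_mono mult_right_mono) (auto simp: component_le_norm_cart is_vector_normD(1)[OF assms])
  also have "\<dots> \<le> C * norm x"
    unfolding C_def by (simp add: sum_distrib_left[symmetric] algebra_simps)
  finally show "N x \<le> C * norm x" .
qed

lemma continuous_on_vector_norm:
  fixes N :: "real^'n \<Rightarrow> real"
  assumes "is_vector_norm N"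
  shows "continuous_on S N"
proof -
  obtain C where C: "C > 0" "\<And>x. N x \<le> C * norm x"
    using vector_norm_le_norm[OF assms] by blast
  have "dist (N y) (N x) \<le> C * dist y x" for x y :: "real^'n"
  proof -
    have "N y \<le> N x + N (y - x)" "N x \<le> N y + N (x - y)"
      using is_vector_normD(4)[OF assms, of "y - x" x] is_vector_normD(4)[OF assms, of "x - y" y] by simp_all
    moreover have "N (x - y) = N (y - x)" by (rule vector_norm_minus_commute[OF assms])
    moreover have "N (y - x) \<le> C * dist y x" using C(2)[of "y - x"] by (simp add: dist_norm)
    ultimately show ?thesis by (simp add: dist_real_def)
  qed
  then have "C-lipschitz_on S N"
    using C(1) by (intro lipschitz_onI) auto
  then show ?thesis by (rule lipschitz_on_continuous_on)
qed

lemma vector_norm_ge_norm: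
  fixes N :: "real^'n \<Rightarrow> real"
  assumes "is_vector_norm N"
  obtains m where "m > 0" "\<And>x. m * norm x \<le> N x"
proof -
  have "sphere (0::real^'n) 1 \<noteq> {}" by simp
  then obtain y :: "real^'n" where y: "y \<in> sphere 0 1" "\<And>z. z \<in> sphere 0 1 \<Longrightarrow> N y \<le> N z"
    using continuous_attains_inf[OF compact_sphere _ continuous_on_vector_norm[OF assms]] by blast
  have "N y * norm x \<le> N x" for x :: "real^'n"
  proof (cases "x = 0")
    case False
    then have "N y \<le> N ((1 / norm x) *\<^sub>R x)" by (intro y(2)) simp
    also have "\<dots> = N x / norm x" using is_vector_normD(3)[OF assms] by simp
    finally show ?thesis using False by (simp add: field_simps)
  qed (use is_vector_normD(2)[OF assms, of 0] in simp)
  moreover have "N y > 0" using y(1) by (intro vector_norm_pos[OF assms]) auto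
  ultimately show ?thesis using that by blast
qed

lemma vector_norm_unit_exists:
  fixes N :: "real^'n \<Rightarrow> real"
  assumes "is_vector_norm N"
  obtains x :: "real^'n" where "N x = 1"
proof -
  obtain i :: 'n where True by blast
  let ?e = "axis i (1::real) :: real^'n"
  have "N ?e > 0" by (rule vector_norm_pos[OF assms]) (simp add: axis_eq_0_iff)
  then have "N ((1 / N ?e) *\<^sub>R ?e) = 1" using is_vector_normD(3)[OF assms] by simp
  then show ?thesis by (rule that)
qed

lemma norm_matrix_vector_mult_le:
  fixes M :: "real^'n^'m"
  shows "norm (M *v x) \<le> real CARD('m) * real CARD('n) * norm M * norm x"
proof -
  have "\<bar>M $ i $ j\<bar> \<le> norm M" for i j
    using component_le_norm_cart[of "M $ i" j] Finite_Cartesian_Product.norm_nth_le[of M i] by simp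
  then have "onorm ((*v) M) \<le> real CARD('m) * real CARD('n) * norm M"
    by (rule onorm_le_matrix_component)
  then show ?thesis
    using onorm[OF matrix_vector_mul_bounded_linear, of M x] mult_right_mono[of _ _ "norm x"] by force
qed

lemma vector_norm_matrix_vector_mult_le:
  fixes N :: "real^'n \<Rightarrow> real"
  assumes "is_vector_norm N"
  obtains K where "K > 0" "\<And>(M::real^'n^'n) x. N (M *v x) \<le> K * norm M * N x"
proof -
  obtain C where C: "C > 0" "\<And>x. N x \<le> C * norm x" using vector_norm_le_norm[OF assms] by blast
  obtain m where m: "m > 0" "\<And>x. m * norm x \<le> N x" using vector_norm_ge_norm[OF assms] by blast
  define K where "K = C * real CARD('n) * real CARD('n) / m"
  have "K > 0" using C m unfolding K_def by simp
  moreover have "N (M *v x) \<le> K * norm M * N x" for M :: "real^'n^'n" and x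
  proof -
    have "N (M *v x) \<le> C * (real CARD('n) * real CARD('n) * norm M * norm x)"
      using C norm_matrix_vector_mult_le[of M x] by (meson mult_left_mono less_imp_le order_trans)
    also have "\<dots> \<le> C * (real CARD('n) * real CARD('n) * norm M * (N x / m))"
      using m C(1) by (intro mult_left_mono) (auto simp: field_simps)
    also have "\<dots> = K * norm M * N x" unfolding K_def by simp
    finally show ?thesis .
  qed
  ultimately show ?thesis by (rule that)
qed

lemma bdd_above_induced_norm:
  fixes N :: "real^'n \<Rightarrow> real"
  assumes "is_vector_norm N"
  shows "bdd_above {N (M *v x) | x. N x = 1}"
proof -
  obtain K where K: "\<And>(M::real^'n^'n) x. N (M *v x) \<le> K * norm M * N x"
    using vector_norm_matrix_vector_mult_le[OF assms] by blast
  show ?thesis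
  proof (rule bdd_aboveI)
    fix y assume "y \<in> {N (M *v x) | x. N x = 1}"
    then obtain x where "y = N (M *v x)" "N x = 1" by blast
    then show "y \<le> K * norm M" using K[of M x] by simp
  qed
qed

lemma induced_norm_vector_le:
  fixes N :: "real^'n \<Rightarrow> real"
  assumes "is_vector_norm N"
  shows "N (M *v x) \<le> induced_norm N M * N x"
proof (cases "x = 0")
  case False
  then have p: "N x > 0" by (rule vector_norm_pos[OF assms])
  let ?y = "(1 / N x) *\<^sub>R x"
  have "N ?y = 1" using is_vector_normD(3)[OF assms] p by simp
  then have "N (M *v ?y) \<le> induced_norm N M"
    unfolding induced_norm_def by (intro cSup_upper bdd_above_induced_norm[OF assms]) blast
  moreover have "N (M *v ?y) = N (M *v x) / N x"
    using is_vector_normD(3)[OF assms] p by (simp add: matrix_vector_mult_scaleR)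
  ultimately show ?thesis using p by (simp add: field_simps)
qed (use is_vector_normD(2)[OF assms, of 0] in simp)

lemma induced_norm_le:
  fixes N :: "real^'n \<Rightarrow> real"
  assumes "is_vector_norm N" "\<And>x. N x = 1 \<Longrightarrow> N (M *v x) \<le> k"
  shows "induced_norm N M \<le> k"
  unfolding induced_norm_def using vector_norm_unit_exists[OF assms(1)] assms(2)
  by (intro cSup_least) auto

lemma induced_norm_add_le:
  fixes N :: "real^'n \<Rightarrow> real"
  assumes "is_vector_norm N"
  shows "induced_norm N (M1 + M2) \<le> induced_norm N M1 + induced_norm N M2"
proof (rule induced_norm_le[OF assms])
  fix x :: "real^'n" assume "N x = 1"
  have "N ((M1 + M2) *v x) \<le> N (M1 *v x) + N (M2 *v x)"
    using is_vector_normD(4)[OF assms] by (simp add: matrix_vector_mult_add_rdistrib)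
  also have "\<dots> \<le> induced_norm N M1 + induced_norm N M2"
    using induced_norm_vector_le[OF assms, of M1 x] induced_norm_vector_le[OF assms, of M2 x] \<open>N x = 1\<close>
    by simp
  finally show "N ((M1 + M2) *v x) \<le> induced_norm N M1 + induced_norm N M2" .
qed

lemma induced_norm_scaleR:
  fixes N :: "real^'n \<Rightarrow> real"
  assumes "is_vector_norm N"
  shows "induced_norm N (c *\<^sub>R M) \<le> \<bar>c\<bar> * induced_norm N M"
proof (rule induced_norm_le[OF assms])
  fix x :: "real^'n" assume "N x = 1"
  have "N ((c *\<^sub>R M) *v x) = \<bar>c\<bar> * N (M *v x)"
    using is_vector_normD(3)[OF assms] by (simp add: scaleR_matrix_vector_assoc[symmetric])
  also have "\<dots> \<le> \<bar>c\<bar> * induced_norm N M"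
    using induced_norm_vector_le[OF assms, of M x] \<open>N x = 1\<close> by (intro mult_left_mono) auto
  finally show "N ((c *\<^sub>R M) *v x) \<le> \<bar>c\<bar> * induced_norm N M" .
qed

lemma induced_norm_mat_1:
  fixes N :: "real^'n \<Rightarrow> real"
  assumes "is_vector_norm N"
  shows "induced_norm N (mat 1 :: real^'n^'n) = 1"
proof (rule antisym)
  show "induced_norm N (mat 1 :: real^'n^'n) \<le> 1" by (rule induced_norm_le[OF assms]) simp
  obtain x :: "real^'n" where "N x = 1" using vector_norm_unit_exists[OF assms] by blast
  then show "1 \<le> induced_norm N (mat 1 :: real^'n^'n)"
    using induced_norm_vector_le[OF assms, of "mat 1" x] by simp
qed

lemma induced_norm_le_norm:
  fixes N :: "real^'n \<Rightarrow> real"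
  assumes "is_vector_norm N"
  obtains K where "K > 0" "\<And>M::real^'n^'n. induced_norm N M \<le> K * norm M"
proof -
  obtain K where K: "K > 0" "\<And>(M::real^'n^'n) x. N (M *v x) \<le> K * norm M * N x"
    using vector_norm_matrix_vector_mult_le[OF assms] by blast
  have "induced_norm N M \<le> K * norm M" for M :: "real^'n^'n"
    by (rule induced_norm_le[OF assms]) (metis K(2) mult.right_neutral)
  with K(1) show ?thesis by (rule that)
qed

lemma induced_norm_identity_plus_le:
  fixes N :: "real^'n \<Rightarrow> real"
  assumes "is_vector_norm N" "0 \<le> h"
  shows "induced_norm N (mat 1 + h *\<^sub>R M) \<le> 1 + h * induced_norm N M"
  using induced_norm_add_le[OF assms(1), of "mat 1" "h *\<^sub>R M"] induced_norm_scaleR[OF assms(1), of h M]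
    induced_norm_mat_1[OF assms(1)] assms(2) by simp

definition log_norm_quotient :: "(real^'n \<Rightarrow> real) \<Rightarrow> real^'n^'n \<Rightarrow> real \<Rightarrow> real" where
  "log_norm_quotient N M h = (induced_norm N (mat 1 + h *\<^sub>R M) - 1) / h"

text \<open>The quotient is nondecreasing in \<open>h > 0\<close> because \<open>h \<mapsto> induced_norm N (mat 1 + h *\<^sub>R M)\<close>
  is convex with value \<open>1\<close> at \<open>0\<close>.\<close>
lemma log_norm_quotient_mono:
  fixes N :: "real^'n \<Rightarrow> real"
  assumes "is_vector_norm N" "0 < h1" "h1 \<le> h2"
  shows "log_norm_quotient N M h1 \<le> log_norm_quotient N M h2"
proof -
  define \<theta> where "\<theta> = h1 / h2"
  have \<theta>: "0 < \<theta>" "\<theta> \<le> 1" using assms unfolding \<theta>_def by auto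
  have "mat 1 + h1 *\<^sub>R M = (1 - \<theta>) *\<^sub>R (mat 1 :: real^'n^'n) + \<theta> *\<^sub>R (mat 1 + h2 *\<^sub>R M)"
    using assms unfolding \<theta>_def by (simp add: algebra_simps)
  then have "induced_norm N (mat 1 + h1 *\<^sub>R M)
      \<le> induced_norm N ((1 - \<theta>) *\<^sub>R mat 1) + induced_norm N (\<theta> *\<^sub>R (mat 1 + h2 *\<^sub>R M))"
    using induced_norm_add_le[OF assms(1)] by simp
  also have "\<dots> \<le> (1 - \<theta>) + \<theta> * induced_norm N (mat 1 + h2 *\<^sub>R M)"
    using induced_norm_scaleR[OF assms(1), of "1 - \<theta>" "mat 1"] induced_norm_scaleR[OF assms(1), of \<theta>]
      induced_norm_mat_1[OF assms(1)] \<theta> by (intro add_mono) auto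
  finally have "induced_norm N (mat 1 + h1 *\<^sub>R M) \<le> (1 - \<theta>) + \<theta> * induced_norm N (mat 1 + h2 *\<^sub>R M)" .
  then have "induced_norm N (mat 1 + h1 *\<^sub>R M) - 1 \<le> \<theta> * (induced_norm N (mat 1 + h2 *\<^sub>R M) - 1)"
    by (simp add: algebra_simps)
  then show ?thesis
    using assms(2,3) unfolding log_norm_quotient_def \<theta>_def by (simp add: field_simps)
qed

lemma log_norm_quotient_bounds:
  fixes N :: "real^'n \<Rightarrow> real"
  assumes "is_vector_norm N" "0 < h"
  shows "- induced_norm N M \<le> log_norm_quotient N M h" "log_norm_quotient N M h \<le> induced_norm N M"
proof -
  have "induced_norm N (mat 1 :: real^'n^'n) \<le> induced_norm N (mat 1 + h *\<^sub>R M) + h * induced_norm N M"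
    using induced_norm_add_le[OF assms(1), of "mat 1 + h *\<^sub>R M" "(- h) *\<^sub>R M"]
      induced_norm_scaleR[OF assms(1), of "-h" M] assms(2) by simp
  then show "- induced_norm N M \<le> log_norm_quotient N M h"
    unfolding log_norm_quotient_def using induced_norm_mat_1[OF assms(1)] assms(2) by (simp add: field_simps)
  show "log_norm_quotient N M h \<le> induced_norm N M"
    using induced_norm_identity_plus_le[OF assms(1), of h M] assms(2)
    unfolding log_norm_quotient_def by (simp add: field_simps)
qed

lemma bdd_below_log_norm_quotient:
  fixes N :: "real^'n \<Rightarrow> real"
  assumes "is_vector_norm N"
  shows "bdd_below (log_norm_quotient N M ` {0<..})"
  using log_norm_quotient_bounds(1)[OF assms] by (intro bdd_belowI[of _ "- induced_norm N M"]) auto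

lemma log_norm_quotient_tendsto_Inf:
  fixes N :: "real^'n \<Rightarrow> real"
  assumes "is_vector_norm N"
  shows "(log_norm_quotient N M \<longlongrightarrow> Inf (log_norm_quotient N M ` {0<..})) (at_right 0)"
proof (rule tendstoI)
  fix e :: real assume "e > 0"
  let ?L = "Inf (log_norm_quotient N M ` {0<..})"
  obtain h0 where h0: "h0 > 0" "log_norm_quotient N M h0 < ?L + e"
    using cInf_lessD[of "log_norm_quotient N M ` {0<..}" "?L + e"] \<open>e > 0\<close> by auto
  show "\<forall>\<^sub>F h in at_right 0. dist (log_norm_quotient N M h) ?L < e"
    using eventually_at_right_real[OF h0(1)]
  proof eventually_elim
    case (elim h)
    then have "?L \<le> log_norm_quotient N M h"
      using bdd_below_log_norm_quotient[OF assms] by (intro cInf_lower) auto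
    moreover have "log_norm_quotient N M h \<le> log_norm_quotient N M h0"
      using log_norm_quotient_mono[OF assms] elim by simp
    ultimately show ?case using h0 by (simp add: dist_real_def)
  qed
qed

lemma log_norm_eq_Inf:
  fixes N :: "real^'n \<Rightarrow> real"
  assumes "is_vector_norm N"
  shows "log_norm N M = Inf (log_norm_quotient N M ` {0<..})"
  unfolding log_norm_def log_norm_quotient_def[symmetric, abs_def]
  using tendsto_Lim[OF _ log_norm_quotient_tendsto_Inf[OF assms]] by simp

lemma tendsto_log_norm:
  fixes N :: "real^'n \<Rightarrow> real"
  assumes "is_vector_norm N"
  shows "(log_norm_quotient N M \<longlongrightarrow> log_norm N M) (at_right 0)"
  using log_norm_quotient_tendsto_Inf[OF assms] log_norm_eq_Inf[OF assms] by simp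

lemma log_norm_le_quotient:
  fixes N :: "real^'n \<Rightarrow> real"
  assumes "is_vector_norm N" "0 < h"
  shows "log_norm N M \<le> log_norm_quotient N M h"
  unfolding log_norm_eq_Inf[OF assms(1)] using bdd_below_log_norm_quotient[OF assms(1)] assms(2)
  by (intro cInf_lower) auto

lemma log_norm_le_induced_norm:
  fixes N :: "real^'n \<Rightarrow> real"
  assumes "is_vector_norm N"
  shows "log_norm N M \<le> induced_norm N M"
  using log_norm_le_quotient[OF assms zero_less_one, of M] log_norm_quotient_bounds(2)[OF assms zero_less_one, of M]
  by linarith

lemma log_norm_add_le:
  fixes N :: "real^'n \<Rightarrow> real"
  assumes "is_vector_norm N"
  shows "log_norm N (M + D) \<le> log_norm N M + log_norm N D"
proof (rule tendsto_le[OF trivial_limit_at_right_real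
      tendsto_add[OF tendsto_log_norm[OF assms] tendsto_log_norm[OF assms]] tendsto_const])
  show "\<forall>\<^sub>F h in at_right 0. log_norm N (M + D) \<le> log_norm_quotient N M h + log_norm_quotient N D h"
    using eventually_at_right_less[of "0::real"]
  proof eventually_elim
    case (elim h)
    then have h: "0 < h" by simp
    have "mat 1 + (h/2) *\<^sub>R (M + D) = (1/2) *\<^sub>R (mat 1 + h *\<^sub>R M) + (1/2) *\<^sub>R (mat 1 + h *\<^sub>R D)"
      by (simp add: vec_eq_iff mat_def algebra_simps)
    then have "induced_norm N (mat 1 + (h/2) *\<^sub>R (M + D))
        \<le> (1/2) * induced_norm N (mat 1 + h *\<^sub>R M) + (1/2) * induced_norm N (mat 1 + h *\<^sub>R D)"
      using induced_norm_add_le[OF assms, of "(1/2) *\<^sub>R (mat 1 + h *\<^sub>R M)" "(1/2) *\<^sub>R (mat 1 + h *\<^sub>R D)"]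
        induced_norm_scaleR[OF assms, of "1/2" "mat 1 + h *\<^sub>R M"]
        induced_norm_scaleR[OF assms, of "1/2" "mat 1 + h *\<^sub>R D"] by simp
    then have "2 * (induced_norm N (mat 1 + (h/2) *\<^sub>R (M + D)) - 1) / h
        \<le> ((induced_norm N (mat 1 + h *\<^sub>R M) - 1) + (induced_norm N (mat 1 + h *\<^sub>R D) - 1)) / h"
      using h by (intro divide_right_mono) auto
    moreover have "log_norm_quotient N (M + D) (h/2) = 2 * (induced_norm N (mat 1 + (h/2) *\<^sub>R (M + D)) - 1) / h"
      "log_norm_quotient N M h + log_norm_quotient N D h
        = ((induced_norm N (mat 1 + h *\<^sub>R M) - 1) + (induced_norm N (mat 1 + h *\<^sub>R D) - 1)) / h"
      unfolding log_norm_quotient_def by (simp_all add: add_divide_distrib[symmetric])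
    ultimately have "log_norm_quotient N (M + D) (h/2) \<le> log_norm_quotient N M h + log_norm_quotient N D h"
      by simp
    then show ?case
      using log_norm_le_quotient[OF assms, of "h/2" "M + D"] h by linarith
  qed
qed

lemma abs_log_norm_diff_le:
  fixes N :: "real^'n \<Rightarrow> real"
  assumes "is_vector_norm N"
  shows "\<bar>log_norm N M1 - log_norm N M2\<bar> \<le> induced_norm N (M1 - M2)"
proof -
  have "log_norm N (M1 + (M2 - M1)) \<le> log_norm N M1 + induced_norm N (M2 - M1)"
    "log_norm N (M2 + (M1 - M2)) \<le> log_norm N M2 + induced_norm N (M1 - M2)"
    using log_norm_add_le[OF assms, of M1 "M2 - M1"] log_norm_add_le[OF assms, of M2 "M1 - M2"]
      log_norm_le_induced_norm[OF assms, of "M2 - M1"] log_norm_le_induced_norm[OF assms, of "M1 - M2"]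
    by linarith+
  moreover have "induced_norm N (M2 - M1) = induced_norm N (M1 - M2)"
    using induced_norm_scaleR[OF assms, of "-1" "M1 - M2"] induced_norm_scaleR[OF assms, of "-1" "M2 - M1"]
    by simp
  ultimately show ?thesis by simp
qed

lemma continuous_on_log_norm:
  fixes N :: "real^'n \<Rightarrow> real"
  assumes "is_vector_norm N"
  shows "continuous_on S (log_norm N)"
proof -
  obtain K where K: "K > 0" "\<And>M::real^'n^'n. induced_norm N M \<le> K * norm M"
    using induced_norm_le_norm[OF assms] by blast
  have "dist (log_norm N M1) (log_norm N M2) \<le> K * dist M1 M2" for M1 M2 :: "real^'n^'n"
    using abs_log_norm_diff_le[OF assms, of M1 M2] K(2)[of "M1 - M2"] by (simp add: dist_real_def dist_norm)
  then have "K-lipschitz_on S (log_norm N)"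
    using K(1) by (intro lipschitz_onI) auto
  then show ?thesis by (rule lipschitz_on_continuous_on)
qed

lemma isCont_log_norm:
  fixes N :: "real^'n \<Rightarrow> real"
  assumes "is_vector_norm N" "isCont M t"
  shows "isCont (\<lambda>s. log_norm N (M s)) t"
  using continuous_at_compose[OF assms(2), of "log_norm N"]
    continuous_on_log_norm[OF assms(1), of UNIV] by (simp add: continuous_on_eq_continuous_at o_def)

lemma eventually_induced_norm_identity_plus_le:
  fixes N :: "real^'n \<Rightarrow> real"
  assumes "is_vector_norm N" "\<delta> > 0"
  shows "\<forall>\<^sub>F h in at_right 0. induced_norm N (mat 1 + h *\<^sub>R M) \<le> 1 + h * (log_norm N M + \<delta>)"
  using tendstoD[OF tendsto_log_norm[OF assms(1), of M] assms(2)] eventually_at_right_less[of "0::real"]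
proof eventually_elim
  case (elim h)
  then have "(induced_norm N (mat 1 + h *\<^sub>R M) - 1) / h < log_norm N M + \<delta>"
    unfolding log_norm_quotient_def by (simp add: dist_real_def)
  then show ?case using elim(2) by (simp add: field_simps)
qed

definition upper_right_Dini_le :: "(real \<Rightarrow> real) \<Rightarrow> real \<Rightarrow> real \<Rightarrow> bool" where
  "upper_right_Dini_le f t c \<longleftrightarrow> (\<forall>\<delta>>0. \<forall>\<^sub>F h in at_right 0. f (t + h) \<le> f t + h * (c + \<delta>))"

lemma upper_right_Dini_le_mono:
  assumes "upper_right_Dini_le f t c" "c \<le> c'"
  shows "upper_right_Dini_le f t c'"
  unfolding upper_right_Dini_le_def
proof (intro allI impI)
  fix \<delta> :: real assume "\<delta> > 0"
  with assms(1) have "\<forall>\<^sub>F h in at_right 0. f (t + h) \<le> f t + h * (c + \<delta>)"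
    unfolding upper_right_Dini_le_def by blast
  with eventually_at_right_less[of "0::real"]
  show "\<forall>\<^sub>F h in at_right 0. f (t + h) \<le> f t + h * (c' + \<delta>)"
  proof eventually_elim
    case (elim h)
    have "h * (c + \<delta>) \<le> h * (c' + \<delta>)" using assms(2) elim(1) by (intro mult_left_mono) auto
    with elim(2) show ?case by linarith
  qed
qed

lemma DERIV_imp_upper_right_Dini_le:
  assumes "(f has_real_derivative f') (at t)"
  shows "upper_right_Dini_le f t f'"
  unfolding upper_right_Dini_le_def
proof (intro allI impI)
  fix \<delta> :: real assume "\<delta> > 0"
  have "((\<lambda>h. (f (t + h) - f t) / h) \<longlongrightarrow> f') (at_right 0)"
    using assms unfolding DERIV_def by (rule filterlim_mono) (simp_all add: at_le)
  from tendstoD[OF this \<open>\<delta> > 0\<close>] eventually_at_right_less[of "0::real"]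
  show "\<forall>\<^sub>F h in at_right 0. f (t + h) \<le> f t + h * (f' + \<delta>)"
  proof eventually_elim
    case (elim h)
    then have "(f (t + h) - f t) / h < f' + \<delta>" by (simp add: dist_real_def)
    then show ?case using elim(2) by (simp add: field_simps)
  qed
qed

text \<open>Replacing \<open>u (t + h)\<close> by its Dini bound \<open>u t + h (c + \<delta>)\<close> makes the product differentiable in \<open>h\<close>.\<close>
lemma upper_right_Dini_le_mult_add:
  assumes "(\<phi> has_real_derivative \<phi>') (at t)" "(\<psi> has_real_derivative \<psi>') (at t)"
    and "\<And>s. 0 \<le> \<phi> s" and "upper_right_Dini_le u t c"
  shows "upper_right_Dini_le (\<lambda>s. \<phi> s * u s + \<psi> s) t (\<phi>' * u t + \<phi> t * c + \<psi>')"
  unfolding upper_right_Dini_le_def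
proof (intro allI impI)
  fix \<delta> :: real assume "\<delta> > 0"
  define \<delta>1 where "\<delta>1 = \<delta> / (2 * (\<phi> t + 1))"
  have "\<delta>1 > 0" "\<phi> t * \<delta>1 \<le> \<delta> / 2"
    using \<open>\<delta> > 0\<close> assms(3)[of t] unfolding \<delta>1_def by (simp_all add: field_simps)
  define \<Phi> where "\<Phi> h = \<phi> (t + h) * (u t + h * (c + \<delta>1)) + \<psi> (t + h)" for h
  have "((\<lambda>h. \<phi> (t + h)) has_real_derivative \<phi>') (at 0)" "((\<lambda>h. \<psi> (t + h)) has_real_derivative \<psi>') (at 0)"
    using DERIV_shift[of \<phi> \<phi>' 0 t] DERIV_shift[of \<psi> \<psi>' 0 t] assms(1,2) by (simp_all add: add.commute)
  then have "(\<Phi> has_real_derivative \<phi>' * u t + \<phi> t * (c + \<delta>1) + \<psi>') (at 0)"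
    unfolding \<Phi>_def[abs_def] by (auto intro!: derivative_eq_intros)
  then have "upper_right_Dini_le \<Phi> 0 (\<phi>' * u t + \<phi> t * (c + \<delta>1) + \<psi>')"
    by (rule DERIV_imp_upper_right_Dini_le)
  then have "\<forall>\<^sub>F h in at_right 0. \<Phi> h \<le> \<Phi> 0 + h * ((\<phi>' * u t + \<phi> t * (c + \<delta>1) + \<psi>') + \<delta> / 2)"
    unfolding upper_right_Dini_le_def using \<open>\<delta> > 0\<close> by simp
  moreover have "\<forall>\<^sub>F h in at_right 0. u (t + h) \<le> u t + h * (c + \<delta>1)"
    using assms(4) \<open>\<delta>1 > 0\<close> unfolding upper_right_Dini_le_def by blast
  ultimately show "\<forall>\<^sub>F h in at_right 0.
      \<phi> (t + h) * u (t + h) + \<psi> (t + h) \<le> \<phi> t * u t + \<psi> t + h * (\<phi>' * u t + \<phi> t * c + \<psi>' + \<delta>)"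
    using eventually_at_right_less[of "0::real"]
  proof eventually_elim
    case (elim h)
    have "\<phi> (t + h) * u (t + h) + \<psi> (t + h) \<le> \<Phi> h"
      unfolding \<Phi>_def using elim(2) assms(3) by (simp add: mult_left_mono)
    also have "\<dots> \<le> \<Phi> 0 + h * ((\<phi>' * u t + \<phi> t * (c + \<delta>1) + \<psi>') + \<delta> / 2)" by (rule elim(1))
    also have "\<dots> = \<phi> t * u t + \<psi> t + h * (\<phi>' * u t + \<phi> t * c + \<psi>') + h * (\<phi> t * \<delta>1 + \<delta> / 2)"
      unfolding \<Phi>_def by (simp add: algebra_simps)
    also have "\<dots> \<le> \<phi> t * u t + \<psi> t + h * (\<phi>' * u t + \<phi> t * c + \<psi>') + h * \<delta>"
      using mult_left_mono[of "\<phi> t * \<delta>1 + \<delta> / 2" \<delta> h] \<open>\<phi> t * \<delta>1 \<le> \<delta> / 2\<close> elim(3) by simp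
    finally show ?case by (simp add: algebra_simps)
  qed
qed

lemma eventually_has_vector_derivative_remainder_le:
  fixes x :: "real \<Rightarrow> 'a::real_normed_vector"
  assumes "(x has_vector_derivative v) (at t)" "\<delta> > 0"
  shows "\<forall>\<^sub>F h in at_right 0. norm (x (t + h) - x t - h *\<^sub>R v) \<le> h * \<delta>"
proof -
  have "((\<lambda>y. norm (x y - x t - (y - t) *\<^sub>R v) / norm (y - t)) \<longlongrightarrow> 0) (at t)"
    using assms(1) unfolding has_vector_derivative_def has_derivative_iff_norm by simp
  from LIM_offset_zero[OF this]
  have "((\<lambda>h. norm (x (t + h) - x t - h *\<^sub>R v) / norm h) \<longlongrightarrow> 0) (at 0)"
    by simp
  then have "((\<lambda>h. norm (x (t + h) - x t - h *\<^sub>R v) / norm h) \<longlongrightarrow> 0) (at_right 0)"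
    by (rule filterlim_mono) (simp_all add: at_le)
  from tendstoD[OF this assms(2)] eventually_at_right_less[of "0::real"]
  show ?thesis
  proof eventually_elim
    case (elim h)
    then show ?case by (simp add: field_simps)
  qed
qed

lemma upper_right_Dini_le_vector_norm:
  fixes N :: "real^'n \<Rightarrow> real" and x :: "real \<Rightarrow> real^'n"
  assumes N: "is_vector_norm N" and x: "(x has_vector_derivative (M *v x t + w)) (at t)"
  shows "upper_right_Dini_le (\<lambda>s. N (x s)) t (log_norm N M * N (x t) + N w)"
  unfolding upper_right_Dini_le_def
proof (intro allI impI)
  fix \<delta> :: real assume "\<delta> > 0"
  obtain C where C: "C > 0" "\<And>v::real^'n. N v \<le> C * norm v" using vector_norm_le_norm[OF N] by blast
  define u where "u = N (x t)"
  have "u \<ge> 0" unfolding u_def using is_vector_normD(1)[OF N] by simp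
  define \<delta>1 where "\<delta>1 = \<delta> / (2 * (u + 1))"
  define \<delta>2 where "\<delta>2 = \<delta> / (2 * C)"
  have "\<delta>1 > 0" "\<delta>2 > 0" "\<delta>1 * u + C * \<delta>2 \<le> \<delta>"
    using \<open>\<delta> > 0\<close> \<open>u \<ge> 0\<close> C(1) unfolding \<delta>1_def \<delta>2_def by (simp_all add: field_simps)
  let ?v = "M *v x t + w"
  from eventually_induced_norm_identity_plus_le[OF N \<open>\<delta>1 > 0\<close>, of M]
    eventually_has_vector_derivative_remainder_le[OF x \<open>\<delta>2 > 0\<close>] eventually_at_right_less[of "0::real"]
  show "\<forall>\<^sub>F h in at_right 0. N (x (t + h)) \<le> N (x t) + h * (log_norm N M * N (x t) + N w + \<delta>)"
  proof eventually_elim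
    case (elim h)
    have "x (t + h) = ((mat 1 + h *\<^sub>R M) *v x t + h *\<^sub>R w) + (x (t + h) - x t - h *\<^sub>R ?v)"
      by (simp add: algebra_simps scaleR_matrix_vector_assoc[symmetric])
    then have "N (x (t + h)) \<le> N ((mat 1 + h *\<^sub>R M) *v x t + h *\<^sub>R w) + N (x (t + h) - x t - h *\<^sub>R ?v)"
      using is_vector_normD(4)[OF N] by metis
    also have "N ((mat 1 + h *\<^sub>R M) *v x t + h *\<^sub>R w) \<le> N ((mat 1 + h *\<^sub>R M) *v x t) + N (h *\<^sub>R w)"
      by (rule is_vector_normD(4)[OF N])
    also have "N (x (t + h) - x t - h *\<^sub>R ?v) \<le> C * (h * \<delta>2)"
      by (rule order_trans[OF C(2)]) (use elim(2) C(1) in simp)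
    also have "N (h *\<^sub>R w) = h * N w" using is_vector_normD(3)[OF N, of h w] elim(3) by simp
    also have "N ((mat 1 + h *\<^sub>R M) *v x t) \<le> (1 + h * (log_norm N M + \<delta>1)) * u"
      using induced_norm_vector_le[OF N, of "mat 1 + h *\<^sub>R M" "x t"] mult_right_mono[OF elim(1) \<open>u \<ge> 0\<close>]
      unfolding u_def by simp
    finally have "N (x (t + h)) \<le> u + h * (log_norm N M * u + N w + (\<delta>1 * u + C * \<delta>2))"
      by (simp add: algebra_simps)
    also have "\<dots> \<le> u + h * (log_norm N M * u + N w + \<delta>)"
      using \<open>\<delta>1 * u + C * \<delta>2 \<le> \<delta>\<close> elim(3) by simp
    finally show ?case unfolding u_def .
  qed
qed

lemma nonpos_at_left_limit:
  fixes g :: "real \<Rightarrow> real"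
  assumes "\<alpha> < s" "continuous_on {\<alpha>..s} g" "\<And>\<tau>. \<alpha> \<le> \<tau> \<Longrightarrow> \<tau> < s \<Longrightarrow> g \<tau> \<le> 0"
  shows "g s \<le> 0"
proof -
  have "(g \<longlongrightarrow> g s) (at s within {\<alpha>..s})"
    using assms(1,2) by (simp add: continuous_on_def)
  then have "(g \<longlongrightarrow> g s) (at_left s)" by (simp add: at_within_Icc_at_left[OF assms(1)])
  moreover have "\<forall>\<^sub>F \<tau> in at_left s. g \<tau> \<le> 0"
    using eventually_at_left_real[OF assms(1)] by eventually_elim (simp add: assms(3))
  ultimately show ?thesis by (rule tendsto_upperbound) simp
qed

lemma nonpos_by_right_continuation:
  fixes g :: "real \<Rightarrow> real"
  assumes "\<alpha> \<le> \<beta>" "continuous_on {\<alpha>..\<beta>} g" "g \<alpha> \<le> 0"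
    and step: "\<And>t. t \<in> {\<alpha>..<\<beta>} \<Longrightarrow> g t \<le> 0 \<Longrightarrow> \<forall>\<^sub>F h in at_right 0. g (t + h) \<le> 0"
  shows "g \<beta> \<le> 0"
proof -
  define P where "P = {t \<in> {\<alpha>..\<beta>}. \<forall>\<tau>\<in>{\<alpha>..t}. g \<tau> \<le> 0}"
  define s where "s = Sup P"
  have "\<alpha> \<in> P" unfolding P_def using assms(1,3) by auto
  have "bdd_above P" unfolding P_def by (auto intro: bdd_aboveI[of _ \<beta>])
  have s: "\<alpha> \<le> s" "s \<le> \<beta>"
    unfolding s_def using \<open>\<alpha> \<in> P\<close> \<open>bdd_above P\<close> by (auto intro!: cSup_upper cSup_least simp: P_def)
  have below: "g \<tau> \<le> 0" if \<tau>: "\<alpha> \<le> \<tau>" "\<tau> < s" for \<tau>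
  proof -
    obtain t where "t \<in> P" "\<tau> < t" using less_cSupD[of P \<tau>] \<open>\<alpha> \<in> P\<close> \<tau>(2) unfolding s_def by blast
    then show ?thesis unfolding P_def using \<tau>(1) by auto
  qed
  have "g s \<le> 0"
  proof (cases "\<alpha> = s")
    case False
    with s have "\<alpha> < s" by simp
    then show ?thesis
      by (rule nonpos_at_left_limit[OF _ continuous_on_subset[OF assms(2)] below]) (use s in auto)
  qed (use assms(3) in simp)
  have "s = \<beta>"
  proof (rule ccontr)
    assume "s \<noteq> \<beta>"
    with s have "s \<in> {\<alpha>..<\<beta>}" by simp
    then obtain \<eta> where \<eta>: "\<eta> > 0" "\<And>h. 0 < h \<Longrightarrow> h < \<eta> \<Longrightarrow> g (s + h) \<le> 0"
      using step[of s] \<open>g s \<le> 0\<close> unfolding eventually_at_right_field by auto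
    define m where "m = min \<eta> (\<beta> - s)"
    have m: "0 < m" "m \<le> \<eta>" "m \<le> \<beta> - s" using \<eta>(1) \<open>s \<in> {\<alpha>..<\<beta>}\<close> unfolding m_def by auto
    define t where "t = s + m / 2"
    have "t \<in> P" unfolding P_def
    proof (intro CollectI conjI ballI)
      show "t \<in> {\<alpha>..\<beta>}" using s m unfolding t_def by simp
      fix \<tau> assume \<tau>: "\<tau> \<in> {\<alpha>..t}"
      show "g \<tau> \<le> 0"
      proof (cases "\<tau> \<le> s")
        case True
        then show ?thesis using below[of \<tau>] \<open>g s \<le> 0\<close> \<tau> by (cases "\<tau> = s") auto
      next
        case False
        then have "0 < \<tau> - s" "\<tau> - s < \<eta>" using \<tau> m unfolding t_def by auto
        then show ?thesis using \<eta>(2)[of "\<tau> - s"] by simp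
      qed
    qed
    then have "t \<le> s" unfolding s_def using \<open>bdd_above P\<close> by (rule cSup_upper)
    then show False using m unfolding t_def by simp
  qed
  with \<open>g s \<le> 0\<close> show ?thesis by simp
qed

lemma upper_right_Dini_nonpos_imp_le_slope:
  fixes z :: "real \<Rightarrow> real"
  assumes "\<alpha> \<le> \<beta>" "continuous_on {\<alpha>..\<beta>} z" "\<delta> > 0"
    and "\<And>t. t \<in> {\<alpha>..<\<beta>} \<Longrightarrow> upper_right_Dini_le z t 0"
  shows "z \<beta> \<le> z \<alpha> + \<delta> * (\<beta> - \<alpha>)"
proof -
  define g where "g \<tau> = z \<tau> - z \<alpha> - \<delta> * (\<tau> - \<alpha>)" for \<tau>
  have "g \<beta> \<le> 0"
  proof (rule nonpos_by_right_continuation[OF assms(1)])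
    show "continuous_on {\<alpha>..\<beta>} g" unfolding g_def by (intro continuous_intros assms(2))
    fix t assume "t \<in> {\<alpha>..<\<beta>}" "g t \<le> 0"
    from assms(4)[OF \<open>t \<in> {\<alpha>..<\<beta>}\<close>] \<open>\<delta> > 0\<close>
    have "\<forall>\<^sub>F h in at_right 0. z (t + h) \<le> z t + h * \<delta>"
      unfolding upper_right_Dini_le_def by simp
    then show "\<forall>\<^sub>F h in at_right 0. g (t + h) \<le> 0"
      by eventually_elim (use \<open>g t \<le> 0\<close> in \<open>simp add: g_def algebra_simps\<close>)
  qed (simp add: g_def)
  then show ?thesis unfolding g_def by simp
qed

lemma upper_right_Dini_nonpos_imp_le_open:
  fixes z :: "real \<Rightarrow> real"
  assumes "\<alpha> \<le> \<beta>" "continuous_on {\<alpha>..\<beta>} z"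
    and Dini: "\<And>t. t \<in> {\<alpha><..<\<beta>} \<Longrightarrow> upper_right_Dini_le z t 0"
  shows "z \<beta> \<le> z \<alpha>"
proof (cases "\<alpha> = \<beta>")
  case False
  then have "\<alpha> < \<beta>" using assms(1) by simp
  have bound: "z \<beta> \<le> z a" if a: "a \<in> {\<alpha><..<\<beta>}" for a
  proof (rule field_le_epsilon)
    fix e :: real assume "e > 0"
    have "z \<beta> \<le> z a + e / (\<beta> - a) * (\<beta> - a)"
    proof (rule upper_right_Dini_nonpos_imp_le_slope)
      show "continuous_on {a..\<beta>} z" using a by (intro continuous_on_subset[OF assms(2)]) auto
      show "t \<in> {a..<\<beta>} \<Longrightarrow> upper_right_Dini_le z t 0" for t using a by (intro Dini) auto
    qed (use a \<open>e > 0\<close> in auto)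
    then show "z \<beta> \<le> z a + e" using a by simp
  qed
  have "(z \<longlongrightarrow> z \<alpha>) (at \<alpha> within {\<alpha>..\<beta>})"
    using assms(1,2) by (simp add: continuous_on_def)
  then have "(z \<longlongrightarrow> z \<alpha>) (at_right \<alpha>)"
    by (simp add: at_within_Icc_at_right[OF \<open>\<alpha> < \<beta>\<close>])
  moreover have "\<forall>\<^sub>F a in at_right \<alpha>. z \<beta> \<le> z a"
    using eventually_at_right_real[OF \<open>\<alpha> < \<beta>\<close>] by eventually_elim (rule bound)
  ultimately show ?thesis by (rule tendsto_lowerbound) simp
qed simp

lemma upper_right_Dini_nonpos_imp_le:
  fixes z :: "real \<Rightarrow> real"
  assumes "finite E"
  shows "\<alpha> \<le> \<beta> \<Longrightarrow> continuous_on {\<alpha>..\<beta>} z \<Longrightarrow>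
    (\<And>t. t \<in> {\<alpha><..<\<beta>} - E \<Longrightarrow> upper_right_Dini_le z t 0) \<Longrightarrow> z \<beta> \<le> z \<alpha>"
  using assms
proof (induction E arbitrary: \<alpha> \<beta> rule: finite_induct)
  case empty
  then show ?case by (rule upper_right_Dini_nonpos_imp_le_open) auto
next
  case (insert e E)
  show ?case
  proof (cases "e \<in> {\<alpha><..<\<beta>}")
    case True
    have "z e \<le> z \<alpha>"
    proof (rule insert.IH)
      show "continuous_on {\<alpha>..e} z" by (rule continuous_on_subset[OF insert.prems(2)]) (use True in auto)
      show "t \<in> {\<alpha><..<e} - E \<Longrightarrow> upper_right_Dini_le z t 0" for t
        using True by (intro insert.prems(3)) auto
    qed (use True in auto)
    moreover have "z \<beta> \<le> z e"
    proof (rule insert.IH)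
      show "continuous_on {e..\<beta>} z" by (rule continuous_on_subset[OF insert.prems(2)]) (use True in auto)
      show "t \<in> {e<..<\<beta>} - E \<Longrightarrow> upper_right_Dini_le z t 0" for t
        using True by (intro insert.prems(3)) auto
    qed (use True in auto)
    ultimately show ?thesis by simp
  next
    case False
    show ?thesis
    proof (rule insert.IH)
      show "t \<in> {\<alpha><..<\<beta>} - E \<Longrightarrow> upper_right_Dini_le z t 0" for t
        using False by (intro insert.prems(3)) auto
    qed (use insert.prems in auto)
  qed
qed

lemma bounded_bilinear_matrix_vector_mult:
  "bounded_bilinear (\<lambda>(M::real^'n^'m) (v::real^'n). M *v v)"
proof (rule bounded_bilinear.intro)
  show "\<exists>K. \<forall>(M::real^'n^'m) v. norm (M *v v) \<le> norm M * norm v * K"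
    using norm_matrix_vector_mult_le by (intro exI[of _ "real CARD('m) * real CARD('n)"]) (auto simp: algebra_simps)
qed (auto simp: algebra_simps matrix_vector_right_distrib scaleR_matrix_vector_assoc)

lemma isCont_matrix_mult_left:
  fixes K :: "real \<Rightarrow> real^'n^'m" and B :: "real^'m^'k"
  assumes "isCont K t"
  shows "isCont (\<lambda>s. B ** K s) t"
proof -
  have "linear ((**) B)"
    by (rule linearI) (simp_all add: matrix_add_ldistrib matrix_scalar_ac scalar_matrix_assoc)
  then have "bounded_linear ((**) B)" by (simp add: linear_conv_bounded_linear)
  then have "isCont ((**) B) (K t)" by (rule linear_continuous_at)
  from continuous_at_compose[OF assms this] show ?thesis by (simp add: o_def)
qed

lemma integral_has_vector_derivative_at_interior:
  fixes f :: "real \<Rightarrow> 'a::banach"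
  assumes "f integrable_on {c..b}" "c < t" "t < b" "isCont f t"
  shows "((\<lambda>s. integral {c..s} f) has_vector_derivative f t) (at t)"
proof -
  have "t \<in> {c..b} - {}" using assms(2,3) by simp
  then have "((\<lambda>s. integral {c..s} f) has_vector_derivative f t) (at t within {c..b} - {})"
    by (rule integral_has_vector_derivative_continuous_at[OF assms(1) _ finite.emptyI
          continuous_at_imp_continuous_at_within[OF assms(4)]])
  moreover have "t \<in> interior {c..b}" using assms(2,3) by simp
  ultimately show ?thesis using at_within_interior[of t "{c..b}"] by simp
qed

lemma solution_has_vector_derivative:
  fixes G :: "real \<Rightarrow> 'a::banach"
  assumes sol: "\<forall>t\<ge>t0. (G has_integral (x t - x t0)) {t0..t}" and "t0 < t" "isCont G t"
  shows "(x has_vector_derivative G t) (at t)"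
proof -
  have "G integrable_on {t0..t + 1}"
    using sol[rule_format, of "t + 1"] \<open>t0 < t\<close> by (auto dest: has_integral_integrable)
  then have "((\<lambda>s. integral {t0..s} G) has_vector_derivative G t) (at t)"
    by (rule integral_has_vector_derivative_at_interior) (use assms(2,3) in auto)
  from has_vector_derivative_add[OF has_vector_derivative_const[of "x t0"] this]
  have deriv: "((\<lambda>s. x t0 + integral {t0..s} G) has_vector_derivative G t) (at t)" by simp
  have eq: "x t0 + integral {t0..s} G = x s" if "s \<in> {t0<..}" for s
    using integral_unique[OF sol[rule_format, of s]] that by simp
  show ?thesis
    by (rule has_vector_derivative_transform_within_open[OF deriv open_greaterThan _ eq])
      (use \<open>t0 < t\<close> in simp_all)
qed

lemma isCont_of_continuous_on_Diff_finite:
  fixes f :: "real \<Rightarrow> 'a::topological_space"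
  assumes "finite S" "continuous_on ({t0..b} - S) f" "t \<in> {t0<..<b} - S"
  shows "isCont f t"
proof -
  have "open ({t0<..<b} - S)" using assms(1) by (intro open_Diff finite_imp_closed) auto
  moreover have "{t0<..<b} - S \<subseteq> {t0..b} - S" by auto
  ultimately have "t \<in> interior ({t0..b} - S)"
    using interior_maximal assms(3) by (metis subsetD)
  then show ?thesis using continuous_on_interior[OF assms(2)] by simp
qed

lemma piecewise_continuous_from_isCont:
  assumes "piecewise_continuous_from t0 f" "t0 \<le> b"
  obtains S where "finite S" "\<And>t. t \<in> {t0<..<b} - S \<Longrightarrow> isCont f t"
proof -
  obtain S where S: "finite S" "continuous_on ({t0..b} - S) f"
    using assms unfolding piecewise_continuous_from_def by blast
  show ?thesis using that[OF S(1)] isCont_of_continuous_on_Diff_finite[OF S] by blast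
qed

lemma piecewise_continuous_state_time_isCont:
  fixes w :: "'b::metric_space \<Rightarrow> real \<Rightarrow> 'a::metric_space"
  assumes "piecewise_continuous_state_time t0 w" "t0 \<le> b"
  obtains S where "finite S" "\<And>y t. t \<in> {t0<..<b} - S \<Longrightarrow> isCont (\<lambda>(y, t). w y t) (y, t)"
proof -
  obtain S where S: "finite S" "continuous_on (UNIV \<times> ({t0..b} - S)) (\<lambda>(y, t). w y t)"
    using assms unfolding piecewise_continuous_state_time_def by blast
  have "isCont (\<lambda>(y, t). w y t) (y, t)" if "t \<in> {t0<..<b} - S" for y t
  proof -
    have "open ({t0<..<b} - S)" using S(1) by (intro open_Diff finite_imp_closed) auto
    moreover have "{t0<..<b} - S \<subseteq> {t0..b} - S" by auto
    ultimately have "t \<in> interior ({t0..b} - S)"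
      using interior_maximal that by (metis subsetD)
    then have "(y, t) \<in> interior (UNIV \<times> ({t0..b} - S))" by (simp add: interior_Times)
    then show ?thesis using continuous_on_interior[OF S(2)] by simp
  qed
  with S(1) show ?thesis by (rule that)
qed

lemma integral_has_real_derivative_at_interior:
  fixes f :: "real \<Rightarrow> real"
  assumes "f integrable_on {c..b}" "c < t" "t < b" "isCont f t"
  shows "((\<lambda>s. integral {c..s} f) has_real_derivative f t) (at t)"
  using integral_has_vector_derivative_at_interior[OF assms]
  by (simp add: has_real_derivative_iff_has_vector_derivative)

text \<open>The weighted function \<open>exp (- \<integral>(a + d)) u - \<epsilon> exp (- \<integral>a)\<close> is nonincreasing.\<close>
lemma upper_right_Dini_Gronwall_bound:
  fixes u a d :: "real \<Rightarrow> real"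
  assumes "T \<le> b" "finite E" "continuous_on {T..b} u" "0 \<le> \<epsilon>"
    and a: "a integrable_on {T..b}" "\<And>t. t \<in> {T<..<b} \<Longrightarrow> a t \<le> 0"
    and d: "d integrable_on {T..b}" "\<And>t. t \<in> {T..b} \<Longrightarrow> 0 \<le> d t"
    and cont: "\<And>t. t \<in> {T<..<b} - E \<Longrightarrow> isCont a t \<and> isCont d t"
    and Dini: "\<And>t. t \<in> {T<..<b} - E \<Longrightarrow> upper_right_Dini_le u t ((a t + d t) * u t - \<epsilon> * a t)"
  shows "u b \<le> exp (integral {T..b} d) * (u T * exp (integral {T..b} a) + \<epsilon>)"
proof -
  define p where "p s = integral {T..s} a" for s
  define D where "D s = integral {T..s} d" for s
  define z where "z s = exp (- (p s + D s)) * u s + - \<epsilon> * exp (- p s)" for s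
  have "z b \<le> z T"
  proof (rule upper_right_Dini_nonpos_imp_le[OF assms(2,1)])
    show "continuous_on {T..b} z"
      unfolding z_def p_def D_def
      by (intro continuous_intros assms(3) indefinite_integral_continuous_1 a(1) d(1))
    fix t assume t: "t \<in> {T<..<b} - E"
    have dp: "(p has_real_derivative a t) (at t)" and dD: "(D has_real_derivative d t) (at t)"
      unfolding p_def D_def using t cont[OF t] a(1) d(1)
      by (auto intro!: integral_has_real_derivative_at_interior)
    have "0 \<le> D t"
      unfolding D_def using t d by (intro integral_nonneg integrable_on_subinterval[OF d(1)]) auto
    have "upper_right_Dini_le z t
        (- (a t + d t) * exp (- (p t + D t)) * u t + exp (- (p t + D t)) * ((a t + d t) * u t - \<epsilon> * a t)
          + - \<epsilon> * (- a t * exp (- p t)))"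
      unfolding z_def
      by (rule upper_right_Dini_le_mult_add[OF _ _ _ Dini[OF t]])
        (auto intro!: derivative_eq_intros dp dD simp: algebra_simps)
    moreover have "- (a t + d t) * exp (- (p t + D t)) * u t + exp (- (p t + D t)) * ((a t + d t) * u t - \<epsilon> * a t)
          + - \<epsilon> * (- a t * exp (- p t)) = \<epsilon> * a t * (exp (- p t) - exp (- (p t + D t)))"
      by (simp add: algebra_simps)
    moreover have "\<epsilon> * a t * (exp (- p t) - exp (- (p t + D t))) \<le> 0"
      using a(2)[of t] t \<open>0 \<le> \<epsilon>\<close> \<open>0 \<le> D t\<close>
      by (intro mult_nonpos_nonneg mult_nonneg_nonpos) auto
    ultimately show "upper_right_Dini_le z t 0" by (metis upper_right_Dini_le_mono)
  qed
  then have "exp (- (p b + D b)) * u b - \<epsilon> * exp (- p b) \<le> u T - \<epsilon>"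
    unfolding z_def p_def D_def by simp
  moreover have "exp (- (p b + D b)) * u b - \<epsilon> * exp (- p b) = (u b - \<epsilon> * exp (D b)) / (exp (p b) * exp (D b))"
    by (simp add: exp_minus exp_diff exp_add field_simps)
  ultimately have "u b - \<epsilon> * exp (D b) \<le> (u T - \<epsilon>) * (exp (p b) * exp (D b))"
    by (simp add: pos_divide_le_eq)
  also have "\<dots> \<le> exp (D b) * (u T * exp (p b) + \<epsilon>) - \<epsilon> * exp (D b)"
    using \<open>0 \<le> \<epsilon>\<close> by (simp add: algebra_simps)
  finally show ?thesis unfolding p_def D_def by simp
qed

text \<open>A non-integrable function has integral \<open>0\<close>, so integrals diverging to \<open>-\<infinity>\<close> force integrability.\<close>
lemma integrable_on_if_integral_tendsto_at_bot:
  fixes a :: "real \<Rightarrow> real"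
  assumes "filterlim (\<lambda>t. integral {t0..t} a) at_bot at_top" "t0 \<le> c"
  shows "a integrable_on {c..e}"
proof -
  obtain T where T: "\<And>t. t \<ge> T \<Longrightarrow> integral {t0..t} a \<le> -1"
    using assms(1) unfolding filterlim_at_bot eventually_at_top_linorder by blast
  define t where "t = max e (max T c)"
  have "integral {t0..t} a \<le> -1" using T[of t] unfolding t_def by simp
  then have "a integrable_on {t0..t}" using not_integrable_integral by force
  moreover have "{c..e} \<subseteq> {t0..t}" using assms(2) unfolding t_def by auto
  ultimately show ?thesis by (rule integrable_on_subinterval)
qed

lemma tendsto_zero_if_eventual_exp_integral_bound:
  fixes u a :: "real \<Rightarrow> real"
  assumes "\<And>t. 0 \<le> u t" "C > 0"
    and a: "filterlim (\<lambda>t. integral {t0..t} a) at_bot at_top"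
    and bound: "\<And>\<epsilon>. \<epsilon> > 0 \<Longrightarrow> \<exists>T\<ge>t0. \<forall>t\<ge>T. u t \<le> C * (u T * exp (integral {T..t} a) + \<epsilon>)"
  shows "(u \<longlongrightarrow> 0) at_top"
proof (rule tendstoI)
  fix e :: real assume "e > 0"
  define \<epsilon> where "\<epsilon> = e / (4 * C)"
  have "\<epsilon> > 0" using \<open>e > 0\<close> \<open>C > 0\<close> unfolding \<epsilon>_def by simp
  then obtain T where T: "T \<ge> t0" "\<And>t. t \<ge> T \<Longrightarrow> u t \<le> C * (u T * exp (integral {T..t} a) + \<epsilon>)"
    using bound by blast
  define Z where "Z = ln (\<epsilon> / (u T + 1)) + integral {t0..T} a"
  have "\<forall>\<^sub>F t in at_top. integral {t0..t} a \<le> Z" using a unfolding filterlim_at_bot by blast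
  with eventually_ge_at_top[of T] show "\<forall>\<^sub>F t in at_top. dist (u t) 0 < e"
  proof eventually_elim
    case (elim t)
    have "integral {t0..T} a + integral {T..t} a = integral {t0..t} a"
      by (rule Henstock_Kurzweil_Integration.integral_combine)
        (use T(1) elim(1) integrable_on_if_integral_tendsto_at_bot[OF a order_refl, of t] in auto)
    then have "integral {T..t} a \<le> ln (\<epsilon> / (u T + 1))" using elim(2) unfolding Z_def by linarith
    moreover have "\<epsilon> / (u T + 1) > 0" using \<open>\<epsilon> > 0\<close> assms(1)[of T] by simp
    ultimately have "exp (integral {T..t} a) \<le> \<epsilon> / (u T + 1)"
      by (metis exp_le_cancel_iff exp_ln)
    then have "u T * exp (integral {T..t} a) \<le> u T * (\<epsilon> / (u T + 1))"
      using assms(1)[of T] by (rule mult_left_mono)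
    also have "\<dots> \<le> \<epsilon>" using assms(1)[of T] \<open>\<epsilon> > 0\<close> by (simp add: field_simps)
    finally have "u T * exp (integral {T..t} a) + \<epsilon> \<le> 2 * \<epsilon>" by simp
    then have "C * (u T * exp (integral {T..t} a) + \<epsilon>) \<le> C * (2 * \<epsilon>)"
      using \<open>C > 0\<close> by (intro mult_left_mono) auto
    then have "u t \<le> C * (2 * \<epsilon>)" using T(2)[OF elim(1)] by linarith
    also have "\<dots> < e" using \<open>e > 0\<close> \<open>C > 0\<close> unfolding \<epsilon>_def by simp
    finally show ?case using assms(1)[of t] by (simp add: dist_real_def)
  qed
qed

lemma eventually_le_of_ratio_tendsto_zero:
  fixes g a :: "real \<Rightarrow> real"
  assumes "((\<lambda>t. g t / a t) \<longlongrightarrow> 0) at_top" "\<forall>\<^sub>F t in at_top. a t < 0" "\<epsilon> > 0"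
  shows "\<forall>\<^sub>F t in at_top. g t \<le> - \<epsilon> * a t"
  using tendstoD[OF assms(1,3)] assms(2)
proof eventually_elim
  case (elim t)
  then have "\<bar>g t / a t - 0\<bar> < \<epsilon>" unfolding dist_real_def by blast
  then have "- \<epsilon> \<le> g t / a t" unfolding abs_less_iff by linarith
  from mult_right_mono_neg[OF this, of "a t"] elim(2) show ?case by simp
qed

lemma upper_right_Dini_Gronwall_tendsto_zero:
  fixes u a d g :: "real \<Rightarrow> real"
  assumes u: "continuous_on {t0..} u" "\<And>t. 0 \<le> u t"
    and a: "filterlim (\<lambda>t. integral {t0..t} a) at_bot at_top" "\<forall>\<^sub>F t in at_top. a t < 0"
    and d: "d integrable_on {t0..}" "\<And>t. 0 \<le> d t"
    and g: "((\<lambda>t. g t / a t) \<longlongrightarrow> 0) at_top"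
    and Dini: "\<And>b. t0 \<le> b \<Longrightarrow> \<exists>E. finite E \<and> (\<forall>t\<in>{t0<..<b} - E.
                 isCont a t \<and> isCont d t \<and> upper_right_Dini_le u t ((a t + d t) * u t + g t))"
  shows "(u \<longlongrightarrow> 0) at_top"
proof (rule tendsto_zero_if_eventual_exp_integral_bound[OF u(2) _ a(1)])
  show "exp (integral {t0..} d) > 0" by simp
  fix \<epsilon> :: real assume "\<epsilon> > 0"
  have "\<forall>\<^sub>F t in at_top. a t < 0 \<and> g t \<le> - \<epsilon> * a t \<and> t0 \<le> t"
    using a(2) eventually_le_of_ratio_tendsto_zero[OF g a(2) \<open>\<epsilon> > 0\<close>] eventually_ge_at_top
    by (intro eventually_conj)
  then obtain T where T: "\<And>t. T \<le> t \<Longrightarrow> a t < 0 \<and> g t \<le> - \<epsilon> * a t \<and> t0 \<le> t"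
    unfolding eventually_at_top_linorder by blast
  show "\<exists>T\<ge>t0. \<forall>t\<ge>T. u t \<le> exp (integral {t0..} d) * (u T * exp (integral {T..t} a) + \<epsilon>)"
  proof (intro exI[of _ T] conjI allI impI)
    show "t0 \<le> T" using T by blast
    fix b assume "T \<le> b"
    obtain E where E: "finite E" "\<And>t. t \<in> {t0<..<b} - E \<Longrightarrow>
        isCont a t \<and> isCont d t \<and> upper_right_Dini_le u t ((a t + d t) * u t + g t)"
      using Dini[of b] \<open>t0 \<le> T\<close> \<open>T \<le> b\<close> by auto
    have "u b \<le> exp (integral {T..b} d) * (u T * exp (integral {T..b} a) + \<epsilon>)"
    proof (rule upper_right_Dini_Gronwall_bound[OF \<open>T \<le> b\<close> E(1)])
      show "continuous_on {T..b} u" using \<open>t0 \<le> T\<close> by (auto intro: continuous_on_subset[OF u(1)])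
      show "a integrable_on {T..b}" by (rule integrable_on_if_integral_tendsto_at_bot[OF a(1) \<open>t0 \<le> T\<close>])
      show "d integrable_on {T..b}" using \<open>t0 \<le> T\<close> by (auto intro: integrable_on_subinterval[OF d(1)])
      show "a t \<le> 0" if "t \<in> {T<..<b}" for t using T[of t] that by simp
      fix t assume t: "t \<in> {T<..<b} - E"
      then have "t \<in> {t0<..<b} - E" using \<open>t0 \<le> T\<close> by auto
      then show "isCont a t \<and> isCont d t" using E(2) by blast
      have "(a t + d t) * u t + g t \<le> (a t + d t) * u t - \<epsilon> * a t" using T[of t] t by simp
      then show "upper_right_Dini_le u t ((a t + d t) * u t - \<epsilon> * a t)"
        using E(2)[OF \<open>t \<in> {t0<..<b} - E\<close>] upper_right_Dini_le_mono by blast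
    qed (use T d(2) \<open>\<epsilon> > 0\<close> in auto)
    also have "\<dots> \<le> exp (integral {t0..} d) * (u T * exp (integral {T..b} a) + \<epsilon>)"
    proof (rule mult_right_mono)
      show "exp (integral {T..b} d) \<le> exp (integral {t0..} d)"
        using \<open>t0 \<le> T\<close> d by (auto intro!: integral_subset_le integrable_on_subinterval[OF d(1)])
    qed (use u(2)[of T] \<open>\<epsilon> > 0\<close> in simp)
    finally show "u b \<le> exp (integral {t0..} d) * (u T * exp (integral {T..b} a) + \<epsilon>)" .
  qed
qed

lemma isCont_matrix_vector_mult:
  fixes M :: "real \<Rightarrow> real^'n^'m" and v :: "real \<Rightarrow> real^'n"
  assumes "isCont M t" "isCont v t"
  shows "isCont (\<lambda>s. M s *v v s) t"
  using bounded_bilinear.continuous[OF bounded_bilinear_matrix_vector_mult assms] .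

lemma solution_has_vector_derivative_off_finite:
  fixes A \<Delta> K :: "real \<Rightarrow> real^'n^'n" and B :: "real^'n^'n"
    and \<omega> :: "real^'n \<Rightarrow> real \<Rightarrow> real^'n" and x :: "real \<Rightarrow> real^'n"
  assumes "piecewise_continuous_from t0 A" "piecewise_continuous_from t0 \<Delta>"
    and "piecewise_continuous_from t0 K" "piecewise_continuous_state_time t0 \<omega>"
    and sol: "is_solution_from t0 (\<lambda>y t. (A t + \<Delta> t) *v y + (B ** K t) *v y + \<omega> y t) x"
    and "t0 \<le> b"
  obtains E where "finite E" "\<And>t. t \<in> {t0<..<b} - E \<Longrightarrow> isCont A t \<and> isCont \<Delta> t \<and> isCont K t \<and>
    (x has_vector_derivative ((A t + B ** K t) + \<Delta> t) *v x t + \<omega> (x t) t) (at t)"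
proof -
  obtain SA SD SK S\<omega> where S: "finite SA" "finite SD" "finite SK" "finite S\<omega>"
    and cA: "\<And>t. t \<in> {t0<..<b} - SA \<Longrightarrow> isCont A t"
    and cD: "\<And>t. t \<in> {t0<..<b} - SD \<Longrightarrow> isCont \<Delta> t"
    and cK: "\<And>t. t \<in> {t0<..<b} - SK \<Longrightarrow> isCont K t"
    and c\<omega>: "\<And>y t. t \<in> {t0<..<b} - S\<omega> \<Longrightarrow> isCont (\<lambda>(y, t). \<omega> y t) (y, t)"
    using piecewise_continuous_from_isCont[OF assms(1) \<open>t0 \<le> b\<close>]
      piecewise_continuous_from_isCont[OF assms(2) \<open>t0 \<le> b\<close>]
      piecewise_continuous_from_isCont[OF assms(3) \<open>t0 \<le> b\<close>]
      piecewise_continuous_state_time_isCont[OF assms(4) \<open>t0 \<le> b\<close>] by metis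
  define G where "G s = (A s + \<Delta> s) *v x s + (B ** K s) *v x s + \<omega> (x s) s" for s
  have xcont: "continuous_on {t0..} x" and solG: "\<forall>t\<ge>t0. (G has_integral (x t - x t0)) {t0..t}"
    using sol unfolding is_solution_from_def G_def by auto
  have "isCont A t \<and> isCont \<Delta> t \<and> isCont K t \<and>
      (x has_vector_derivative ((A t + B ** K t) + \<Delta> t) *v x t + \<omega> (x t) t) (at t)"
    if t: "t \<in> {t0<..<b} - (SA \<union> SD \<union> SK \<union> S\<omega>)" for t
  proof (intro conjI)
    show "isCont A t" "isCont \<Delta> t" "isCont K t" using t cA cD cK by auto
    have "isCont x t"
      using continuous_on_interior[OF xcont, of t] t by simp
    moreover have "isCont (\<lambda>s. \<omega> (x s) s) t"
      using continuous_at_compose[of t "\<lambda>s. (x s, s)" "\<lambda>(y, t). \<omega> y t"] \<open>isCont x t\<close> c\<omega>[of t "x t"] t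
      by (auto simp: o_def intro: continuous_intros)
    ultimately have "isCont G t"
      unfolding G_def using \<open>isCont A t\<close> \<open>isCont \<Delta> t\<close> \<open>isCont K t\<close>
      by (intro continuous_add isCont_matrix_vector_mult isCont_matrix_mult_left) auto
    then have "(x has_vector_derivative G t) (at t)"
      using solution_has_vector_derivative[OF solG] t by simp
    moreover have "G t = ((A t + B ** K t) + \<Delta> t) *v x t + \<omega> (x t) t"
      unfolding G_def by (simp add: algebra_simps matrix_vector_mult_add_rdistrib)
    ultimately show "(x has_vector_derivative ((A t + B ** K t) + \<Delta> t) *v x t + \<omega> (x t) t) (at t)"
      by simp
  qed
  with S show ?thesis by (intro that[of "SA \<union> SD \<union> SK \<union> S\<omega>"]) auto
qed

lemma solution_upper_right_Dini_le_norm: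
  fixes A \<Delta> K :: "real \<Rightarrow> real^'n^'n" and B :: "real^'n^'n"
    and \<omega> :: "real^'n \<Rightarrow> real \<Rightarrow> real^'n" and N :: "real^'n \<Rightarrow> real" and x :: "real \<Rightarrow> real^'n"
  assumes "piecewise_continuous_from t0 A" "piecewise_continuous_from t0 \<Delta>"
    and "piecewise_continuous_from t0 K" "piecewise_continuous_state_time t0 \<omega>"
    and N: "is_vector_norm N" and \<omega>: "\<And>y t. t0 \<le> t \<Longrightarrow> N (\<omega> y t) \<le> g t"
    and sol: "is_solution_from t0 (\<lambda>y t. (A t + \<Delta> t) *v y + (B ** K t) *v y + \<omega> y t) x"
    and "t0 \<le> b"
  shows "\<exists>E. finite E \<and> (\<forall>t\<in>{t0<..<b} - E.
    isCont (\<lambda>s. log_norm N (A s + B ** K s)) t \<and> isCont (\<lambda>s. \<bar>log_norm N (\<Delta> s)\<bar>) t \<and>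
    upper_right_Dini_le (\<lambda>s. N (x s)) t
      ((log_norm N (A t + B ** K t) + \<bar>log_norm N (\<Delta> t)\<bar>) * N (x t) + g t))"
proof -
  obtain E where E: "finite E" "\<And>t. t \<in> {t0<..<b} - E \<Longrightarrow> isCont A t \<and> isCont \<Delta> t \<and> isCont K t \<and>
      (x has_vector_derivative ((A t + B ** K t) + \<Delta> t) *v x t + \<omega> (x t) t) (at t)"
    using solution_has_vector_derivative_off_finite[OF assms(1-4) sol \<open>t0 \<le> b\<close>] by blast
  have "isCont (\<lambda>s. log_norm N (A s + B ** K s)) t \<and> isCont (\<lambda>s. \<bar>log_norm N (\<Delta> s)\<bar>) t \<and>
      upper_right_Dini_le (\<lambda>s. N (x s)) t ((log_norm N (A t + B ** K t) + \<bar>log_norm N (\<Delta> t)\<bar>) * N (x t) + g t)"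
    if t: "t \<in> {t0<..<b} - E" for t
  proof (intro conjI)
    have "isCont A t" "isCont \<Delta> t" "isCont K t" using E(2)[OF t] by blast+
    then show "isCont (\<lambda>s. log_norm N (A s + B ** K s)) t"
      by (intro isCont_log_norm[OF N] continuous_add isCont_matrix_mult_left)
    show "isCont (\<lambda>s. \<bar>log_norm N (\<Delta> s)\<bar>) t"
      by (rule continuous_rabs[OF isCont_log_norm[OF N \<open>isCont \<Delta> t\<close>]])
    have "log_norm N ((A t + B ** K t) + \<Delta> t) \<le> log_norm N (A t + B ** K t) + \<bar>log_norm N (\<Delta> t)\<bar>"
      using log_norm_add_le[OF N, of "A t + B ** K t" "\<Delta> t"] by linarith
    then have "log_norm N ((A t + B ** K t) + \<Delta> t) * N (x t)
        \<le> (log_norm N (A t + B ** K t) + \<bar>log_norm N (\<Delta> t)\<bar>) * N (x t)"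
      by (rule mult_right_mono[OF _ is_vector_normD(1)[OF N]])
    moreover have "N (\<omega> (x t) t) \<le> g t" using \<omega> t by simp
    moreover have "upper_right_Dini_le (\<lambda>s. N (x s)) t
        (log_norm N ((A t + B ** K t) + \<Delta> t) * N (x t) + N (\<omega> (x t) t))"
      using upper_right_Dini_le_vector_norm[OF N] E(2)[OF t] by blast
    ultimately show "upper_right_Dini_le (\<lambda>s. N (x s)) t
        ((log_norm N (A t + B ** K t) + \<bar>log_norm N (\<Delta> t)\<bar>) * N (x t) + g t)"
      by (elim upper_right_Dini_le_mono) linarith
  qed
  with E(1) show ?thesis by blast
qed

theorem theorem5:
  fixes t0 :: real
    and A \<Delta> K :: "real \<Rightarrow> real^'n^'n"
    and B :: "real^'n^'n"
    and \<omega> :: "real^'n \<Rightarrow> real \<Rightarrow> real^'n"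
    and N :: "real^'n \<Rightarrow> real"
    and \<omega>t :: "real \<Rightarrow> real^'n"
    and x :: "real \<Rightarrow> real^'n"
  assumes pcA: "piecewise_continuous_from t0 A"
    and pcD: "piecewise_continuous_from t0 \<Delta>"
    and pcK: "piecewise_continuous_from t0 K"
    and pcw: "piecewise_continuous_state_time t0 \<omega>"
    and norm: "is_vector_norm N"
    and A1: "(\<lambda>s. \<bar>log_norm N (\<Delta> s)\<bar>) integrable_on {t0..}"
    and A2: "\<exists>T\<ge>t0. \<forall>t\<ge>T. log_norm N (A t + B ** K t) < 0"
    and A3pc: "piecewise_continuous_from t0 \<omega>t"
    and A3bd: "\<forall>y. \<forall>t\<ge>t0. N (\<omega> y t) \<le> N (\<omega>t t)"
    and A3lim: "((\<lambda>t. N (\<omega>t t) / log_norm N (A t + B ** K t)) \<longlongrightarrow> 0) at_top"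
    and A4: "filterlim (\<lambda>t. integral {t0..t} (\<lambda>s. log_norm N (A s + B ** K s))) at_bot at_top"
    and sol: "is_solution_from t0
                (\<lambda>y t. (A t + \<Delta> t) *v y + (B ** K t) *v y + \<omega> y t) x"
  shows "(x \<longlongrightarrow> 0) at_top"
proof -
  have "((\<lambda>t. N (x t)) \<longlongrightarrow> 0) at_top"
  proof (rule upper_right_Dini_Gronwall_tendsto_zero[OF _ _ A4 _ A1 _ A3lim])
    have "continuous_on {t0..} x" using sol unfolding is_solution_from_def by blast
    then show "continuous_on {t0..} (\<lambda>t. N (x t))"
      by (rule continuous_on_compose2[OF continuous_on_vector_norm[OF norm, of UNIV]]) simp
    show "\<forall>\<^sub>F t in at_top. log_norm N (A t + B ** K t) < 0"
      using A2 unfolding eventually_at_top_linorder by blast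
    show "\<exists>E. finite E \<and> (\<forall>t\<in>{t0<..<b} - E.
        isCont (\<lambda>s. log_norm N (A s + B ** K s)) t \<and> isCont (\<lambda>s. \<bar>log_norm N (\<Delta> s)\<bar>) t \<and>
        upper_right_Dini_le (\<lambda>s. N (x s)) t
          ((log_norm N (A t + B ** K t) + \<bar>log_norm N (\<Delta> t)\<bar>) * N (x t) + N (\<omega>t t)))"
      if "t0 \<le> b" for b
      using A3bd by (intro solution_upper_right_Dini_le_norm[OF pcA pcD pcK pcw norm _ sol that]) blast
  qed (simp_all add: is_vector_normD(1)[OF norm])
  then have lim: "((\<lambda>t. N (x t) / m) \<longlongrightarrow> 0) at_top" for m by (rule tendsto_divide_zero)
  obtain m where m: "m > 0" "\<And>v. m * norm v \<le> N v" using vector_norm_ge_norm[OF norm] by blast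
  have "norm (x t) \<le> N (x t) / m" for t using m by (simp add: pos_le_divide_eq mult.commute)
  then show ?thesis by (intro Lim_null_comparison[OF always_eventually lim[of m]]) simp
qed

end
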